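(* Let $G$ be a cactus. Then the sparing number of $G$ is $r$, where $r$ is the number of odd cycles in $G$.
   Context: A cactus is a connected graph in which any two simple cycles have at most one vertex in common; equivalently, every block is a simple cycle or a single edge. Let $\mathbb{N}_0$ be the set of non-negative integers; for $A,B\subseteq\mathbb{N}_0$, $A+B=\{a+b:a\in A,b\in B\}$. An integer additive set-indexer (IASI) of a graph $G$ is an injective map $f:V(G)\to\mathcal{P}(\mathbb{N}_0)$ such that $f^+:E(G)\to\mathcal{P}(\mathbb{N}_0)$, $f^+(uv)=f(u)+f(v)$, is injective. A weak IASI is an IASI with $|f^+(uv)|=\max(|f(u)|,|f(v)|)$ for every edge $uv$. An edge $e$ is mono-indexed if $|f^+(e)|=1$. The sparing number $\varphi(G)$ is the minimum number of mono-indexed edges over all weak IASIs of $G$. *)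

theory Defs
  imports Main
begin

definition simple_graph :: "'a set \<Rightarrow> 'a set set \<Rightarrow> bool" where
  "simple_graph V E \<longleftrightarrow> finite V \<and>
     (\<forall>e\<in>E. \<exists>u v. e = {u, v} \<and> u \<noteq> v \<and> u \<in> V \<and> v \<in> V)"

definition connected_graph :: "'a set \<Rightarrow> 'a set set \<Rightarrow> bool" where
  "connected_graph V E \<longleftrightarrow> V \<noteq> {} \<and>
     (\<forall>u\<in>V. \<forall>v\<in>V. (u, v) \<in> {(x, y). {x, y} \<in> E}\<^sup>*)"

definition is_cycle :: "'a set \<Rightarrow> 'a set set \<Rightarrow> 'a list \<Rightarrow> bool" where
  "is_cycle V E xs \<longleftrightarrow> length xs \<ge> 3 \<and> distinct xs \<and> set xs \<subseteq> V \<and>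
     (\<forall>i < length xs. {xs ! i, xs ! ((i + 1) mod length xs)} \<in> E)"

definition cycle_edges :: "'a list \<Rightarrow> 'a set set" where
  "cycle_edges xs = {{xs ! i, xs ! ((i + 1) mod length xs)} | i. i < length xs}"

definition cycles :: "'a set \<Rightarrow> 'a set set \<Rightarrow> 'a set set set" where
  "cycles V E = cycle_edges ` {xs. is_cycle V E xs}"

definition odd_cycles :: "'a set \<Rightarrow> 'a set set \<Rightarrow> 'a set set set" where
  "odd_cycles V E = {C \<in> cycles V E. odd (card C)}"

definition cactus :: "'a set \<Rightarrow> 'a set set \<Rightarrow> bool" where
  "cactus V E \<longleftrightarrow> simple_graph V E \<and> connected_graph V E \<and>
     (\<forall>C1\<in>cycles V E. \<forall>C2\<in>cycles V E. C1 \<noteq> C2 \<longrightarrow> card (\<Union>C1 \<inter> \<Union>C2) \<le> 1)"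

definition sumset :: "nat set \<Rightarrow> nat set \<Rightarrow> nat set" where
  "sumset A B = {a + b | a b. a \<in> A \<and> b \<in> B}"

definition edge_set_index :: "('a \<Rightarrow> nat set) \<Rightarrow> 'a set \<Rightarrow> nat set" where
  "edge_set_index f e = (THE S. \<exists>u v. e = {u, v} \<and> S = sumset (f u) (f v))"

definition iasi :: "'a set \<Rightarrow> 'a set set \<Rightarrow> ('a \<Rightarrow> nat set) \<Rightarrow> bool" where
  "iasi V E f \<longleftrightarrow> (\<forall>v\<in>V. finite (f v) \<and> f v \<noteq> {}) \<and> inj_on f V \<and>
     inj_on (edge_set_index f) E"

definition weak_iasi :: "'a set \<Rightarrow> 'a set set \<Rightarrow> ('a \<Rightarrow> nat set) \<Rightarrow> bool" where
  "weak_iasi V E f \<longleftrightarrow> iasi V E f \<and>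
     (\<forall>u v. {u, v} \<in> E \<longrightarrow> card (sumset (f u) (f v)) = max (card (f u)) (card (f v)))"

definition mono_indexed_count :: "'a set set \<Rightarrow> ('a \<Rightarrow> nat set) \<Rightarrow> nat" where
  "mono_indexed_count E f = card {e \<in> E. card (edge_set_index f e) = 1}"

definition sparing_number :: "'a set \<Rightarrow> 'a set set \<Rightarrow> nat" where
  "sparing_number V E = (LEAST k. \<exists>f. weak_iasi V E f \<and> k = mono_indexed_count E f)"

end

theory Submission
  imports Defs
begin

text \<open>In a weak IASI two adjacent vertices cannot both carry sets of size at least two, since
  then the sumset would be larger than both. Along an odd cycle the property ``\<open>f x\<close> is a
  singleton'' therefore cannot alternate, so every odd cycle contains an edge between two
  singletons, which is mono-indexed; odd cycles of a cactus are edge-disjoint, so at least \<open>r\<close>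
  edges are mono-indexed.

  Conversely, induction on the number of edges (deleting an edge on a cycle, or a bridge) yields a
  two-colouring into high and low vertices with no edge between two high vertices, in which every
  edge between low vertices lies on an odd cycle and each odd cycle contains at most one of them.
  Giving high vertices \<open>{0, g x + 1}\<close> and low ones \<open>{2 ^ g x}\<close>, for an injective \<open>g\<close>, is a weak
  IASI whose mono-indexed edges are exactly the low edges, hence at most \<open>r\<close> of them.\<close>

section \<open>Cycles\<close>

definition cycle_edge :: "'a list \<Rightarrow> nat \<Rightarrow> 'a set" where
  "cycle_edge xs i = {xs ! i, xs ! (Suc i mod length xs)}"

lemma cycle_edges_eq_image: "cycle_edges xs = cycle_edge xs ` {..<length xs}"
  unfolding cycle_edges_def cycle_edge_def by auto

lemma cycle_edge_in_cycle_edges: "i < length xs \<Longrightarrow> cycle_edge xs i \<in> cycle_edges xs"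
  by (simp add: cycle_edges_eq_image)

lemma Suc_mod_eq: "j < n \<Longrightarrow> Suc j mod n = (if Suc j = n then 0 else Suc j)"
  by auto

lemma Suc_mod_less: "i < n \<Longrightarrow> Suc i mod n < n"
  by simp

lemma inj_on_cycle_edge:
  assumes dist: "distinct xs" and len: "3 \<le> length xs"
  shows "inj_on (cycle_edge xs) {..<length xs}"
proof (rule inj_onI, rule ccontr)
  let ?n = "length xs"
  fix i j assume i: "i \<in> {..<?n}" and j: "j \<in> {..<?n}"
    and eq: "cycle_edge xs i = cycle_edge xs j" and ne: "i \<noteq> j"
  have "xs ! i \<noteq> xs ! j" using dist i j ne by (simp add: nth_eq_iff_index_eq)
  with eq have "xs ! i = xs ! (Suc j mod ?n) \<and> xs ! (Suc i mod ?n) = xs ! j"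
    unfolding cycle_edge_def by (auto simp: doubleton_eq_iff)
  moreover have "Suc i mod ?n < ?n" "Suc j mod ?n < ?n" using i j by (simp_all add: Suc_mod_less)
  ultimately have "i = Suc j mod ?n" and "Suc i mod ?n = j"
    using dist i j by (auto simp: nth_eq_iff_index_eq)
  thus False using i j len by (cases "Suc j = ?n"; cases "Suc i = ?n") (auto simp: Suc_mod_eq)
qed

lemma card_cycle_edges:
  "distinct xs \<Longrightarrow> 3 \<le> length xs \<Longrightarrow> card (cycle_edges xs) = length xs"
  by (simp add: cycle_edges_eq_image card_image inj_on_cycle_edge)

lemma Union_cycle_edges: "\<Union>(cycle_edges xs) = set xs"
proof
  show "\<Union>(cycle_edges xs) \<subseteq> set xs"
    by (auto simp: cycle_edges_eq_image cycle_edge_def Suc_mod_less intro!: nth_mem)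
  show "set xs \<subseteq> \<Union>(cycle_edges xs)"
    by (force simp: cycle_edges_eq_image cycle_edge_def in_set_conv_nth)
qed

lemma cycle_edges_subset: "is_cycle V E xs \<Longrightarrow> cycle_edges xs \<subseteq> E"
  by (auto simp: is_cycle_def cycle_edges_def)

lemma cycles_subset: "C \<in> cycles V E \<Longrightarrow> C \<subseteq> E"
  unfolding cycles_def using cycle_edges_subset by blast

lemma odd_cycles_subset: "C \<in> odd_cycles V E \<Longrightarrow> C \<subseteq> E"
  unfolding odd_cycles_def using cycles_subset by blast

lemma card_cycle: "is_cycle V E xs \<Longrightarrow> card (cycle_edges xs) = length xs"
  by (simp add: is_cycle_def card_cycle_edges)

lemma is_cycle_Diff:
  "is_cycle V (E - {e}) xs \<longleftrightarrow> is_cycle V E xs \<and> e \<notin> cycle_edges xs"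
  by (auto simp: is_cycle_def cycle_edges_def)

lemma cycles_Diff: "cycles V (E - {e}) = {C \<in> cycles V E. e \<notin> C}"
  unfolding cycles_def by (auto simp: is_cycle_Diff)

lemma odd_cycles_Diff: "odd_cycles V (E - {e}) = {C \<in> odd_cycles V E. e \<notin> C}"
  unfolding odd_cycles_def by (auto simp: cycles_Diff)

lemma cycle_edge_avoiding:
  assumes cyc: "is_cycle V E xs" and v: "v \<in> set xs" and rv: "r \<noteq> v"
  obtains e where "e \<in> cycle_edges xs" "v \<in> e" "r \<notin> e"
proof -
  let ?n = "length xs"
  obtain j where j: "j < ?n" "v = xs ! j" using v by (auto simp: in_set_conv_nth)
  have len: "3 \<le> ?n" and dist: "distinct xs" using cyc by (auto simp: is_cycle_def)
  define p where "p = (if j = 0 then ?n - 1 else j - 1)"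
  have p: "p < ?n" "Suc p mod ?n = j" "p \<noteq> Suc j mod ?n"
    using j(1) len by (auto simp: p_def Suc_mod_eq)
  have "cycle_edge xs j \<in> cycle_edges xs" "cycle_edge xs p \<in> cycle_edges xs"
    using j p by (auto simp: cycle_edges_eq_image)
  moreover have "v \<in> cycle_edge xs j" "v \<in> cycle_edge xs p"
    using j p by (auto simp: cycle_edge_def)
  moreover have "r \<notin> cycle_edge xs j \<or> r \<notin> cycle_edge xs p"
  proof (rule ccontr)
    assume "\<not> ?thesis"
    hence "r = xs ! (Suc j mod ?n)" "r = xs ! p"
      using j p rv by (auto simp: cycle_edge_def)
    moreover have "Suc j mod ?n < ?n" using j(1) by (rule Suc_mod_less)
    ultimately show False using p dist by (simp add: nth_eq_iff_index_eq)
  qed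
  ultimately show ?thesis using that by blast
qed

lemma even_card_changes_iff:
  fixes g :: "nat \<Rightarrow> bool"
  shows "even (card {i. i < m \<and> g i \<noteq> g (Suc i)}) \<longleftrightarrow> g 0 = g m"
proof (induction m)
  case 0 then show ?case by simp
next
  case (Suc m)
  have "{i. i < Suc m \<and> g i \<noteq> g (Suc i)} =
      (if g m \<noteq> g (Suc m) then insert m else id) {i. i < m \<and> g i \<noteq> g (Suc i)}"
    by (auto simp: less_Suc_eq)
  thus ?case using Suc.IH by auto
qed

lemma even_card_cyclic_changes:
  fixes g :: "nat \<Rightarrow> bool"
  assumes "0 < n"
  shows "even (card {i. i < n \<and> g i \<noteq> g (Suc i mod n)})"
proof -
  obtain m where n: "n = Suc m" using assms by (cases n) auto
  have "{i. i < n \<and> g i \<noteq> g (Suc i mod n)} =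
      (if g m \<noteq> g 0 then insert m else id) {i. i < m \<and> g i \<noteq> g (Suc i)}"
    unfolding n by (auto simp: less_Suc_eq Suc_mod_eq)
  thus ?thesis using even_card_changes_iff[of m g] by auto
qed

lemma cyclic_change_iff_even:
  fixes g :: "nat \<Rightarrow> bool"
  assumes k: "k < n" and changes: "\<forall>i<n. i \<noteq> k \<longrightarrow> g i \<noteq> g (Suc i mod n)"
  shows "g k \<noteq> g (Suc k mod n) \<longleftrightarrow> even n"
proof -
  have "{i. i < n \<and> g i \<noteq> g (Suc i mod n)} =
      (if g k \<noteq> g (Suc k mod n) then {..<n} else {..<n} - {k})"
    using changes by auto
  thus ?thesis using even_card_cyclic_changes[of n g] k by (auto split: if_splits)
qed

section \<open>Cactus forests\<close>

lemma simple_graph_edgeE: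
  assumes "simple_graph V E" "e \<in> E"
  obtains u v where "e = {u, v}" "u \<noteq> v" "u \<in> V" "v \<in> V"
  using assms by (auto simp: simple_graph_def)

lemma simple_graph_vertex: "simple_graph V E \<Longrightarrow> {x, y} \<in> E \<Longrightarrow> x \<in> V"
  unfolding simple_graph_def by (metis doubleton_eq_iff)

lemma simple_graph_finite_edges: "simple_graph V E \<Longrightarrow> finite E"
  unfolding simple_graph_def by (metis (no_types, lifting) Pow_iff empty_subsetI
      finite_Pow_iff finite_subset insert_subset subsetI)

lemma finite_cycles: "simple_graph V E \<Longrightarrow> finite (cycles V E)"
  using cycles_subset simple_graph_finite_edges
  by (metis Pow_iff finite_Pow_iff finite_subset subsetI)

text \<open>A cactus without the connectivity requirement; unlike \<open>cactus\<close> it is closed under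
  edge deletion, which the induction below needs.\<close>

definition cactus_forest :: "'a set \<Rightarrow> 'a set set \<Rightarrow> bool" where
  "cactus_forest V E \<longleftrightarrow> simple_graph V E \<and>
     (\<forall>C1\<in>cycles V E. \<forall>C2\<in>cycles V E. C1 \<noteq> C2 \<longrightarrow> card (\<Union>C1 \<inter> \<Union>C2) \<le> 1)"

lemma cactus_imp_cactus_forest: "cactus V E \<Longrightarrow> cactus_forest V E"
  by (simp add: cactus_def cactus_forest_def)

lemma cactus_forest_Diff: "cactus_forest V E \<Longrightarrow> cactus_forest V (E - {e})"
  unfolding cactus_forest_def simple_graph_def cycles_Diff by auto

lemma cactus_forest_cycles_eq:
  assumes cf: "cactus_forest V E" and C1: "C1 \<in> cycles V E" and C2: "C2 \<in> cycles V E"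
    and e: "e \<in> C1" "e \<in> C2"
  shows "C1 = C2"
proof (rule ccontr)
  assume ne: "C1 \<noteq> C2"
  obtain xs where xs: "C1 = cycle_edges xs" using C1 by (auto simp: cycles_def)
  obtain u v where uv: "e = {u, v}" "u \<noteq> v"
    using cf C1 e(1) cycles_subset by (meson cactus_forest_def simple_graph_edgeE subsetD)
  have "{u, v} \<subseteq> \<Union>C1 \<inter> \<Union>C2" using e uv by auto
  moreover have "finite (\<Union>C1 \<inter> \<Union>C2)" using xs by (simp add: Union_cycle_edges)
  ultimately have "card {u, v} \<le> card (\<Union>C1 \<inter> \<Union>C2)" by (simp add: card_mono)
  also have "\<dots> \<le> 1" using cf C1 C2 ne by (auto simp: cactus_forest_def)
  finally show False using uv by simp
qed

lemma rtrancl_imp_distinct_path: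
  assumes "(a, z) \<in> R\<^sup>*"
  shows "\<exists>p. p \<noteq> [] \<and> hd p = a \<and> last p = z \<and> distinct p \<and>
           (\<forall>i. Suc i < length p \<longrightarrow> (p ! i, p ! Suc i) \<in> R)"
  using assms
proof (induction rule: rtrancl_induct)
  case base
  show ?case by (rule exI[of _ "[a]"]) simp
next
  case (step y z)
  then obtain p where p: "p \<noteq> []" "hd p = a" "last p = y" "distinct p"
    "\<forall>i. Suc i < length p \<longrightarrow> (p ! i, p ! Suc i) \<in> R" by blast
  show ?case
  proof (cases "z \<in> set p")
    case True
    then obtain as bs where p_eq: "p = as @ z # bs" by (metis split_list)
    let ?q = "as @ [z]"
    have "\<forall>i. Suc i < length ?q \<longrightarrow> (?q ! i, ?q ! Suc i) \<in> R"
      using p(5) unfolding p_eq by (auto simp: nth_append split: if_splits)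
    moreover have "hd ?q = a" using p(2) p_eq by (cases as) auto
    ultimately show ?thesis using p(4) p_eq by (intro exI[of _ ?q]) simp
  next
    case False
    let ?q = "p @ [z]"
    have "\<forall>i. Suc i < length ?q \<longrightarrow> (?q ! i, ?q ! Suc i) \<in> R"
      using p(1,3,5) step(2)
      by (auto simp: nth_append last_conv_nth less_Suc_eq) (metis One_nat_def diff_Suc_1)
    thus ?thesis using p False by (intro exI[of _ ?q]) simp
  qed
qed

lemma reachable_imp_edge_on_cycle:
  assumes s: "simple_graph V E" and e0: "{r, v} \<in> E" and rv: "r \<noteq> v"
    and reach: "(v, r) \<in> {(x, y). {x, y} \<in> E - {{r, v}}}\<^sup>*"
  shows "\<exists>C\<in>cycles V E. {r, v} \<in> C"
proof -
  obtain p where p: "p \<noteq> []" "hd p = v" "last p = r" "distinct p"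
    and steps: "\<forall>i. Suc i < length p \<longrightarrow> {p ! i, p ! Suc i} \<in> E - {{r, v}}"
    using rtrancl_imp_distinct_path[OF reach] by auto
  let ?n = "length p"
  have p0: "p ! 0 = v" and last: "p ! (?n - 1) = r"
    using p by (simp_all add: hd_conv_nth last_conv_nth)
  have "?n \<noteq> 1" using p0 last rv by auto
  moreover have "?n \<noteq> 2"
  proof
    assume "?n = 2"
    hence "{v, r} \<in> E - {{r, v}}" using steps[rule_format, of 0] p0 last by simp
    thus False by (simp add: insert_commute)
  qed
  moreover have "?n \<noteq> 0" using p(1) by simp
  ultimately have n3: "3 \<le> ?n" by linarith
  have edges: "{p ! i, p ! (Suc i mod ?n)} \<in> E" if i: "i < ?n" for i
  proof (cases "Suc i = ?n")
    case True
    hence "i = ?n - 1" by simp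
    thus ?thesis using True p0 last e0 by (simp add: insert_commute)
  qed (use steps i in simp)
  have "set p \<subseteq> V"
    using edges simple_graph_vertex[OF s] by (auto simp: in_set_conv_nth) blast
  hence cyc: "is_cycle V E p" using n3 p(4) edges by (simp add: is_cycle_def)
  have "Suc (?n - 1) = ?n" using n3 by simp
  hence "cycle_edge p (?n - 1) = {r, v}" using p0 last by (simp add: cycle_edge_def)
  moreover have "cycle_edge p (?n - 1) \<in> cycle_edges p"
    using n3 by (simp add: cycle_edge_in_cycle_edges)
  ultimately show ?thesis using cyc unfolding cycles_def by (intro bexI[of _ "cycle_edges p"]) auto
qed

lemma rtrancl_edge_iff:
  assumes "{x, y} \<in> F"
  shows "(v, x) \<in> {(a, b). {a, b} \<in> F}\<^sup>* \<longleftrightarrow> (v, y) \<in> {(a, b). {a, b} \<in> F}\<^sup>*"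
proof -
  have "(x, y) \<in> {(a, b). {a, b} \<in> F}" "(y, x) \<in> {(a, b). {a, b} \<in> F}"
    using assms by (auto simp: insert_commute)
  thus ?thesis by (meson rtrancl.rtrancl_into_rtrancl)
qed

lemma cycle_vertices_closed:
  assumes cyc: "is_cycle V E ys" and closed: "\<And>x y. {x, y} \<in> E \<Longrightarrow> x \<in> K \<longleftrightarrow> y \<in> K"
  shows "set ys \<subseteq> K \<or> set ys \<inter> K = {}"
proof -
  have "ys ! i \<in> K \<longleftrightarrow> ys ! 0 \<in> K" if "i < length ys" for i
    using that
  proof (induction i)
    case (Suc i)
    have "{ys ! i, ys ! (Suc i mod length ys)} \<in> E"
      using cyc Suc.prems unfolding is_cycle_def by (metis Suc_eq_plus1 Suc_lessD)
    thus ?case using Suc closed by auto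
  qed simp
  thus ?thesis by (auto simp: in_set_conv_nth)
qed

section \<open>Sparing colourings\<close>

text \<open>\<open>c x\<close> marks the high vertices, which will receive a two-element set; edges between two
  low vertices will be the mono-indexed ones.\<close>

definition low_edge :: "('a \<Rightarrow> bool) \<Rightarrow> 'a set \<Rightarrow> bool" where
  "low_edge c e \<longleftrightarrow> (\<forall>x\<in>e. \<not> c x)"

definition sparing_colouring :: "'a set \<Rightarrow> 'a set set \<Rightarrow> ('a \<Rightarrow> bool) \<Rightarrow> bool" where
  "sparing_colouring V E c \<longleftrightarrow>
     (\<forall>e\<in>E. \<exists>x\<in>e. \<not> c x) \<and>
     (\<forall>e\<in>E. low_edge c e \<longrightarrow> (\<exists>C\<in>odd_cycles V E. e \<in> C)) \<and>
     (\<forall>C\<in>odd_cycles V E. \<forall>e1\<in>C. \<forall>e2\<in>C. low_edge c e1 \<longrightarrow> low_edge c e2 \<longrightarrow> e1 = e2)"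

lemma sparing_colouring_not_high:
  "sparing_colouring V E c \<Longrightarrow> e \<in> E \<Longrightarrow> \<exists>x\<in>e. \<not> c x"
  by (simp add: sparing_colouring_def)

lemma sparing_colouring_low_on_odd_cycle:
  "sparing_colouring V E c \<Longrightarrow> e \<in> E \<Longrightarrow> low_edge c e \<Longrightarrow> \<exists>C\<in>odd_cycles V E. e \<in> C"
  by (simp add: sparing_colouring_def)

lemma sparing_colouring_low_unique:
  "sparing_colouring V E c \<Longrightarrow> C \<in> odd_cycles V E \<Longrightarrow> e1 \<in> C \<Longrightarrow> e2 \<in> C \<Longrightarrow>
    low_edge c e1 \<Longrightarrow> low_edge c e2 \<Longrightarrow> e1 = e2"
  unfolding sparing_colouring_def by blast

lemma sparing_colouring_localI:
  assumes edge: "\<And>e. e \<in> E \<Longrightarrow> \<exists>d. sparing_colouring V E d \<and> (\<forall>x\<in>e. c x = d x)"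
    and cycle: "\<And>C. C \<in> odd_cycles V E \<Longrightarrow>
      \<exists>d. sparing_colouring V E d \<and> (\<forall>x\<in>\<Union>C. c x = d x)"
  shows "sparing_colouring V E c"
  unfolding sparing_colouring_def
proof (intro conjI ballI impI)
  fix e assume e: "e \<in> E"
  then obtain d where d: "sparing_colouring V E d" and agree: "\<forall>x\<in>e. c x = d x"
    using edge by blast
  show "\<exists>x\<in>e. \<not> c x" using sparing_colouring_not_high[OF d e] agree by auto
  assume "low_edge c e"
  hence "low_edge d e" using agree by (simp add: low_edge_def)
  thus "\<exists>C\<in>odd_cycles V E. e \<in> C" using sparing_colouring_low_on_odd_cycle[OF d e] by blast
next
  fix C e1 e2 assume C: "C \<in> odd_cycles V E" and e: "e1 \<in> C" "e2 \<in> C"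
    and low: "low_edge c e1" "low_edge c e2"
  obtain d where d: "sparing_colouring V E d" and agree: "\<forall>x\<in>\<Union>C. c x = d x"
    using cycle C by blast
  have "low_edge d e1" "low_edge d e2" using low e agree by (auto simp: low_edge_def)
  thus "e1 = e2" using sparing_colouring_low_unique[OF d C e] by blast
qed

lemma sparing_colouring_update_isolated:
  assumes c: "sparing_colouring V E c" and isolated: "\<forall>e\<in>E. r \<notin> e"
  shows "sparing_colouring V E (c(r := b))"
proof (rule sparing_colouring_localI)
  fix e assume "e \<in> E"
  thus "\<exists>d. sparing_colouring V E d \<and> (\<forall>x\<in>e. (c(r := b)) x = d x)"
    using c isolated by auto
next
  fix C assume "C \<in> odd_cycles V E"
  hence "r \<notin> \<Union>C" using isolated odd_cycles_subset by blast
  thus "\<exists>d. sparing_colouring V E d \<and> (\<forall>x\<in>\<Union>C. (c(r := b)) x = d x)"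
    using c by auto
qed

lemma sparing_colouring_glue:
  assumes s: "simple_graph V E" and c1: "sparing_colouring V E c1" and c2: "sparing_colouring V E c2"
    and closed: "\<And>x y. {x, y} \<in> E \<Longrightarrow> x \<in> K \<longleftrightarrow> y \<in> K"
  shows "sparing_colouring V E (\<lambda>x. if x \<in> K then c2 x else c1 x)"
    (is "sparing_colouring V E ?c")
proof (rule sparing_colouring_localI)
  fix e assume e: "e \<in> E"
  then obtain x y where xy: "e = {x, y}" using s by (metis simple_graph_edgeE)
  hence "e \<subseteq> K \<or> e \<inter> K = {}" using closed e by blast
  thus "\<exists>d. sparing_colouring V E d \<and> (\<forall>z\<in>e. ?c z = d z)"
    using c1 c2 by auto
next
  fix C assume "C \<in> odd_cycles V E"
  then obtain ys where "is_cycle V E ys" "\<Union>C = set ys"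
    by (auto simp: odd_cycles_def cycles_def Union_cycle_edges)
  hence "\<Union>C \<subseteq> K \<or> \<Union>C \<inter> K = {}" using cycle_vertices_closed closed by metis
  thus "\<exists>d. sparing_colouring V E d \<and> (\<forall>z\<in>\<Union>C. ?c z = d z)"
    using c1 c2 by auto
qed

lemma sparing_colouring_insert_bridge:
  assumes c: "sparing_colouring V (E - {{r, v}}) c" and colours: "c r \<noteq> c v"
    and bridge: "\<forall>C\<in>cycles V E. {r, v} \<notin> C"
  shows "sparing_colouring V E c"
proof -
  have odd: "odd_cycles V (E - {{r, v}}) = odd_cycles V E"
    using bridge by (auto simp: odd_cycles_def cycles_Diff)
  have "\<exists>x\<in>{r, v}. \<not> c x" "\<not> low_edge c {r, v}" using colours by (auto simp: low_edge_def)
  thus ?thesis using c unfolding sparing_colouring_def odd by blast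
qed

lemma sparing_colouring_bridge_step:
  assumes s: "simple_graph V E" and e0: "{r, v} \<in> E" "r \<noteq> v"
    and bridge: "\<forall>C\<in>cycles V E. {r, v} \<notin> C"
    and c1: "sparing_colouring V (E - {{r, v}}) c1" and c2: "sparing_colouring V (E - {{r, v}}) c2"
    and colours: "c1 r \<noteq> c2 v"
  shows "\<exists>c. sparing_colouring V E c \<and> c r = c1 r"
proof -
  define K where "K = {x. (v, x) \<in> {(a, b). {a, b} \<in> E - {{r, v}}}\<^sup>*}"
  define c where "c = (\<lambda>x. if x \<in> K then c2 x else c1 x)"
  have "simple_graph V (E - {{r, v}})" using s by (simp add: simple_graph_def)
  moreover have "x \<in> K \<longleftrightarrow> y \<in> K" if "{x, y} \<in> E - {{r, v}}" for x y
    unfolding K_def mem_Collect_eq using that by (rule rtrancl_edge_iff)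
  ultimately have "sparing_colouring V (E - {{r, v}}) c"
    unfolding c_def using sparing_colouring_glue c1 c2 by blast
  moreover have "r \<notin> K"
  proof
    assume "r \<in> K"
    thus False using reachable_imp_edge_on_cycle[OF s e0] bridge by (simp add: K_def)
  qed
  hence "c r = c1 r" by (simp add: c_def)
  moreover have "c v = c2 v" by (simp add: c_def K_def)
  ultimately show ?thesis
    using colours sparing_colouring_insert_bridge[OF _ _ bridge] by metis
qed

lemma bichromatic_off_edge:
  assumes cf: "cactus_forest V E" and C0: "C0 \<in> cycles V E" "e' \<in> C0"
    and c: "sparing_colouring V (E - {e'}) c" and f: "{x, y} \<in> C0" "{x, y} \<noteq> e'"
  shows "c x \<noteq> c y"
proof
  assume eq: "c x = c y"
  have fE: "{x, y} \<in> E - {e'}" using f C0 cycles_subset by blast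
  hence "\<not> c x" using sparing_colouring_not_high[OF c] eq by auto
  hence "low_edge c {x, y}" using eq by (simp add: low_edge_def)
  then obtain D where D: "D \<in> odd_cycles V (E - {e'})" "{x, y} \<in> D"
    using sparing_colouring_low_on_odd_cycle[OF c fE] by blast
  hence "D \<in> cycles V E" "e' \<notin> D" unfolding odd_cycles_Diff by (auto simp: odd_cycles_def)
  moreover have "D = C0" using cactus_forest_cycles_eq[OF cf _ C0(1) D(2) f(1)] calculation by blast
  ultimately show False using C0(2) by simp
qed

lemma low_edges_of_closing_cycle:
  assumes cf: "cactus_forest V E" and xs: "is_cycle V E xs" and e': "e' \<in> cycle_edges xs"
    and c: "sparing_colouring V (E - {e'}) c"
  shows "\<And>f. f \<in> cycle_edges xs \<Longrightarrow> low_edge c f \<Longrightarrow> f = e'"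
    and "low_edge c e' \<Longrightarrow> cycle_edges xs \<in> odd_cycles V E"
proof -
  let ?n = "length xs"
  have C0: "cycle_edges xs \<in> cycles V E" using xs by (auto simp: cycles_def)
  have bichromatic: "c (xs ! i) \<noteq> c (xs ! (Suc i mod ?n))"
    if "i < ?n" "cycle_edge xs i \<noteq> e'" for i
  proof (rule bichromatic_off_edge[OF cf C0 e' c])
    show "{xs ! i, xs ! (Suc i mod ?n)} \<in> cycle_edges xs"
      using cycle_edge_in_cycle_edges[OF that(1)] unfolding cycle_edge_def .
    show "{xs ! i, xs ! (Suc i mod ?n)} \<noteq> e'" using that(2) unfolding cycle_edge_def .
  qed
  show "f = e'" if f: "f \<in> cycle_edges xs" "low_edge c f" for f
  proof (rule ccontr)
    obtain i where i: "i < ?n" "f = cycle_edge xs i"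
      using f(1) by (auto simp: cycle_edges_eq_image)
    assume "f \<noteq> e'"
    hence "c (xs ! i) \<noteq> c (xs ! (Suc i mod ?n))" using bichromatic[OF i(1)] i(2) by blast
    thus False using f(2) i(2) by (simp add: low_edge_def cycle_edge_def)
  qed
  assume low: "low_edge c e'"
  obtain k where k: "k < ?n" "e' = cycle_edge xs k" using e' by (auto simp: cycle_edges_eq_image)
  have inj: "inj_on (cycle_edge xs) {..<?n}"
    using xs by (simp add: is_cycle_def inj_on_cycle_edge)
  have changes: "\<forall>i<?n. i \<noteq> k \<longrightarrow> c (xs ! i) \<noteq> c (xs ! (Suc i mod ?n))"
  proof (intro allI impI)
    fix i assume i: "i < ?n" "i \<noteq> k"
    hence "cycle_edge xs i \<noteq> e'" using k inj by (simp add: inj_on_eq_iff)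
    thus "c (xs ! i) \<noteq> c (xs ! (Suc i mod ?n))" by (rule bichromatic[OF i(1)])
  qed
  have "c (xs ! k) = c (xs ! (Suc k mod ?n))"
    using low k by (simp add: low_edge_def cycle_edge_def)
  hence "odd ?n"
    using cyclic_change_iff_even[where g = "\<lambda>i. c (xs ! i)", OF k(1) changes] by simp
  thus "cycle_edges xs \<in> odd_cycles V E" using C0 xs by (simp add: odd_cycles_def card_cycle)
qed

lemma sparing_colouring_close_cycle:
  assumes cf: "cactus_forest V E" and xs: "is_cycle V E xs" and e': "e' \<in> cycle_edges xs"
    and c: "sparing_colouring V (E - {e'}) c" and z: "z \<in> e'" "\<not> c z"
  shows "sparing_colouring V E c"
  unfolding sparing_colouring_def
proof (intro conjI ballI impI)
  fix e assume e: "e \<in> E"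
  show "\<exists>x\<in>e. \<not> c x"
    using z e sparing_colouring_not_high[OF c, of e] by (cases "e = e'") auto
  assume low: "low_edge c e"
  show "\<exists>C\<in>odd_cycles V E. e \<in> C"
  proof (cases "e = e'")
    case True
    thus ?thesis using low_edges_of_closing_cycle(2)[OF cf xs e' c] low e' by blast
  next
    case False
    thus ?thesis using sparing_colouring_low_on_odd_cycle[OF c, of e] e low
      by (auto simp: odd_cycles_Diff)
  qed
next
  fix D e1 e2 assume D: "D \<in> odd_cycles V E" and e: "e1 \<in> D" "e2 \<in> D"
    and low: "low_edge c e1" "low_edge c e2"
  show "e1 = e2"
  proof (cases "e' \<in> D")
    case True
    have "cycle_edges xs \<in> cycles V E" using xs by (auto simp: cycles_def)
    hence "D = cycle_edges xs"
      using cactus_forest_cycles_eq[OF cf _ _ True e'] D by (auto simp: odd_cycles_def)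
    thus ?thesis using low_edges_of_closing_cycle(1)[OF cf xs e' c] e low by blast
  next
    case False
    hence "D \<in> odd_cycles V (E - {e'})" using D by (simp add: odd_cycles_Diff)
    thus ?thesis using sparing_colouring_low_unique[OF c _ e low] by blast
  qed
qed

lemma sparing_colouring_cycle_step:
  assumes cf: "cactus_forest V E" and e0: "{r, v} \<in> E" "r \<noteq> v"
    and xs: "is_cycle V E xs" "{r, v} \<in> cycle_edges xs"
    and IH: "\<And>e. e \<in> E \<Longrightarrow> \<exists>c. sparing_colouring V (E - {e}) c \<and> c r = b"
  shows "\<exists>c. sparing_colouring V E c \<and> c r = b"
proof (cases b)
  case False
  then obtain c where c: "sparing_colouring V (E - {{r, v}}) c" "c r = b" using IH e0(1) by blast
  hence "sparing_colouring V E c"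
    using sparing_colouring_close_cycle[OF cf xs c(1), of r] False by simp
  thus ?thesis using c(2) by blast
next
  case True
  \<comment> \<open>Reopen the cycle at an edge at \<open>v\<close> avoiding \<open>r\<close>: then \<open>{r, v}\<close> stays
    bichromatic, so \<open>v\<close> is a low endpoint of the reopened edge.\<close>
  have "v \<in> set xs" using xs(2) Union_cycle_edges[of xs] by blast
  then obtain e' where e': "e' \<in> cycle_edges xs" "v \<in> e'" "r \<notin> e'"
    using cycle_edge_avoiding[OF xs(1)] e0(2) by metis
  obtain c where c: "sparing_colouring V (E - {e'}) c" "c r = b"
    using IH e' xs(1) cycle_edges_subset by blast
  have "{r, v} \<noteq> e'" using e'(3) by blast
  hence "c r \<noteq> c v"
    using bichromatic_off_edge[OF cf _ e'(1) c(1) xs(2)] xs(1) by (auto simp: cycles_def)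
  hence "sparing_colouring V E c"
    using sparing_colouring_close_cycle[OF cf xs(1) e'(1) c(1) e'(2)] c(2) True by simp
  thus ?thesis using c(2) by blast
qed

text \<open>Prescribing the colour of one vertex strengthens the induction enough to combine the
  colourings on both sides of a bridge.\<close>

lemma sparing_colouring_exists:
  assumes "cactus_forest V E"
  shows "\<exists>c. sparing_colouring V E c \<and> c r = b"
  using assms
proof (induction "card E" arbitrary: E r b rule: less_induct)
  case less
  have s: "simple_graph V E" using less.prems by (simp add: cactus_forest_def)
  have IH: "\<exists>c. sparing_colouring V (E - {e}) c \<and> c r = b" if "e \<in> E" for e r b
  proof -
    have "card (E - {e}) < card E" using simple_graph_finite_edges[OF s] that by (rule card_Diff1_less)
    thus ?thesis using less.hyps cactus_forest_Diff[OF less.prems] by blast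
  qed
  have at_edge: "\<exists>c. sparing_colouring V E c \<and> c r = b" if rv: "{r, v} \<in> E" "r \<noteq> v" for r v b
  proof (cases "\<exists>C\<in>cycles V E. {r, v} \<in> C")
    case True
    then obtain xs where xs: "is_cycle V E xs" "{r, v} \<in> cycle_edges xs"
      by (auto simp: cycles_def)
    show ?thesis by (rule sparing_colouring_cycle_step[OF less.prems rv xs IH])
  next
    case False
    obtain c1 where c1: "sparing_colouring V (E - {{r, v}}) c1" "c1 r = b"
      using IH[OF rv(1), of r b] by blast
    obtain c2 where c2: "sparing_colouring V (E - {{r, v}}) c2" "c2 v = (\<not> b)"
      using IH[OF rv(1), of v "\<not> b"] by blast
    have "\<forall>C\<in>cycles V E. {r, v} \<notin> C" using False by blast
    from sparing_colouring_bridge_step[OF s rv this c1(1) c2(1)] show ?thesis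
      using c1(2) c2(2) by simp
  qed
  show ?case
  proof (cases "\<exists>e\<in>E. r \<in> e")
    case True
    then obtain e where e: "e \<in> E" "r \<in> e" by blast
    then obtain u w where "e = {u, w}" "u \<noteq> w" using s by (auto elim: simple_graph_edgeE)
    hence "{r, if r = u then w else u} \<in> E" "r \<noteq> (if r = u then w else u)"
      using e by (auto simp: insert_commute)
    thus ?thesis by (rule at_edge)
  next
    case isolated: False
    obtain c where "sparing_colouring V E c"
    proof (cases "E = {}")
      case True
      have "sparing_colouring V E (\<lambda>_. b)"
        using True by (auto simp: sparing_colouring_def dest: odd_cycles_subset)
      thus ?thesis using that by blast
    next
      case False
      then obtain e where "e \<in> E" by blast
      then obtain u w where "{u, w} \<in> E" "u \<noteq> w" using s by (auto elim: simple_graph_edgeE)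
      thus ?thesis using that at_edge by blast
    qed
    hence "sparing_colouring V E (c(r := b))"
      using isolated by (simp add: sparing_colouring_update_isolated)
    thus ?thesis by (intro exI[of _ "c(r := b)"]) simp
  qed
qed

section \<open>The lower bound\<close>

lemma card_le_if_unique_partner:
  assumes B: "finite B" and partner: "\<And>a. a \<in> A \<Longrightarrow> \<exists>b\<in>B. R a b"
    and unique: "\<And>a a' b. a \<in> A \<Longrightarrow> a' \<in> A \<Longrightarrow> b \<in> B \<Longrightarrow> R a b \<Longrightarrow> R a' b \<Longrightarrow> a = a'"
  shows "card A \<le> card B"
proof -
  define h where "h a = (SOME b. b \<in> B \<and> R a b)" for a
  have h: "h a \<in> B \<and> R a (h a)" if "a \<in> A" for a
    unfolding h_def by (rule someI_ex) (use partner[OF that] in blast)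
  have "inj_on h A" using h unique by (metis inj_onI)
  moreover have "h ` A \<subseteq> B" using h by blast
  ultimately show ?thesis using B by (rule card_inj_on_le)
qed

lemma sumset_commute: "sumset A B = sumset B A"
  unfolding sumset_def using add.commute by blast

lemma edge_set_index_doubleton: "edge_set_index f {u, v} = sumset (f u) (f v)"
  unfolding edge_set_index_def
proof (rule the_equality)
  fix S assume "\<exists>u' v'. {u, v} = {u', v'} \<and> S = sumset (f u') (f v')"
  thus "S = sumset (f u) (f v)" by (auto simp: doubleton_eq_iff sumset_commute)
qed blast

lemma sumset_singletons: "sumset {a} {b} = {a + b}"
  by (auto simp: sumset_def)

lemma sumset_pair_singleton: "sumset {0, d} {a} = {a, d + a}"
  by (auto simp: sumset_def)

lemma finite_sumset: "finite A \<Longrightarrow> finite B \<Longrightarrow> finite (sumset A B)"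
proof -
  assume "finite A" "finite B"
  moreover have "sumset A B = (\<lambda>(a, b). a + b) ` (A \<times> B)" by (auto simp: sumset_def)
  ultimately show ?thesis by simp
qed

lemma card_sumset_gt:
  assumes A: "finite A" "A \<noteq> {}" and B: "finite B" "2 \<le> card B"
  shows "card A < card (sumset A B)"
proof -
  obtain x y where xy: "x \<in> B" "y \<in> B" "x \<noteq> y"
    using B card_le_Suc0_iff_eq[OF B(1)] by (metis not_less_eq_eq numeral_2_eq_2)
  hence "Min B \<le> x" "Min B \<le> y" "x \<le> Max B" "y \<le> Max B" using B(1) by simp_all
  hence "Min B < Max B" using xy(3) by linarith
  have "B \<noteq> {}" using xy by blast
  hence "Min B \<in> B" "Max B \<in> B" "Max A \<in> A" using A B by simp_all
  hence sub: "insert (Max A + Max B) ((\<lambda>a. a + Min B) ` A) \<subseteq> sumset A B"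
    unfolding sumset_def by blast
  have new: "Max A + Max B \<notin> (\<lambda>a. a + Min B) ` A"
  proof
    assume "Max A + Max B \<in> (\<lambda>a. a + Min B) ` A"
    then obtain a where "a \<in> A" "Max A + Max B = a + Min B" by blast
    moreover have "a \<le> Max A" using A(1) calculation(1) by simp
    ultimately show False using \<open>Min B < Max B\<close> by linarith
  qed
  have "card A < card (insert (Max A + Max B) ((\<lambda>a. a + Min B) ` A))"
    using new A(1) by (simp add: card_image)
  also have "\<dots> \<le> card (sumset A B)" using sub finite_sumset[OF A(1) B(1)] by (rule card_mono[rotated])
  finally show ?thesis .
qed

lemma weak_iasi_singleton_endpoint:
  assumes s: "simple_graph V E" and f: "weak_iasi V E f" and e: "{u, v} \<in> E"
  shows "card (f u) = 1 \<or> card (f v) = 1"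
proof (rule ccontr)
  have "u \<in> V" "v \<in> V"
    using e simple_graph_vertex[OF s, of u v] simple_graph_vertex[OF s, of v u]
    by (simp_all add: insert_commute)
  hence fin: "finite (f u)" "f u \<noteq> {}" "finite (f v)" "f v \<noteq> {}"
    using f by (auto simp: weak_iasi_def iasi_def)
  have "0 < card (f u)" "0 < card (f v)" using fin by (simp_all add: card_gt_0_iff)
  moreover assume "\<not> ?thesis"
  ultimately have "2 \<le> card (f u)" "2 \<le> card (f v)" by auto
  hence "card (f u) < card (sumset (f u) (f v))" "card (f v) < card (sumset (f u) (f v))"
    using card_sumset_gt fin sumset_commute by metis+
  thus False using f e by (auto simp: weak_iasi_def)
qed

lemma odd_cycle_has_mono_indexed_edge:
  assumes s: "simple_graph V E" and f: "weak_iasi V E f" and C: "C \<in> odd_cycles V E"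
  shows "\<exists>e\<in>C. card (edge_set_index f e) = 1"
proof -
  obtain xs where xs: "is_cycle V E xs" "C = cycle_edges xs"
    using C by (auto simp: odd_cycles_def cycles_def)
  let ?n = "length xs" and ?single = "\<lambda>i. card (f (xs ! i)) = 1"
  have "odd ?n" "0 < ?n" using C xs by (auto simp: odd_cycles_def card_cycle is_cycle_def)
  then obtain i where i: "i < ?n" "?single i = ?single (Suc i mod ?n)"
    using cyclic_change_iff_even[of 0 ?n ?single] by blast
  have e: "{xs ! i, xs ! (Suc i mod ?n)} \<in> E" using xs(1) i(1) by (simp add: is_cycle_def)
  hence "?single i \<and> ?single (Suc i mod ?n)"
    using i(2) weak_iasi_singleton_endpoint[OF s f] by blast
  hence "card (edge_set_index f (cycle_edge xs i)) = 1"
    using f e by (simp add: cycle_edge_def edge_set_index_doubleton weak_iasi_def)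
  thus ?thesis using xs(2) i(1) cycle_edge_in_cycle_edges by blast
qed

lemma card_odd_cycles_le_mono_indexed_count:
  assumes cf: "cactus_forest V E" and f: "weak_iasi V E f"
  shows "card (odd_cycles V E) \<le> mono_indexed_count E f"
  unfolding mono_indexed_count_def
proof (rule card_le_if_unique_partner[where R = "\<lambda>C e. e \<in> C"])
  have s: "simple_graph V E" using cf by (simp add: cactus_forest_def)
  show "finite {e \<in> E. card (edge_set_index f e) = 1}" using simple_graph_finite_edges[OF s] by simp
  show "\<exists>e\<in>{e \<in> E. card (edge_set_index f e) = 1}. e \<in> C" if "C \<in> odd_cycles V E" for C
    using odd_cycle_has_mono_indexed_edge[OF s f that] odd_cycles_subset[OF that] by blast
  show "C = D" if "C \<in> odd_cycles V E" "D \<in> odd_cycles V E"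
    "e \<in> {e \<in> E. card (edge_set_index f e) = 1}" "e \<in> C" "e \<in> D" for C D e
    using cactus_forest_cycles_eq[OF cf] that by (auto simp: odd_cycles_def)
qed

section \<open>A weak IASI with one mono-indexed edge per odd cycle\<close>

lemma bit_two_pow_add_iff: "a \<noteq> b \<Longrightarrow> bit (2 ^ a + 2 ^ b :: nat) n \<longleftrightarrow> n = a \<or> n = b"
  by (subst bit_disjunctive_add_iff) (auto simp: bit_exp_iff)

lemma two_pow_add_eq_iff:
  assumes "a \<noteq> b" "a' \<noteq> b'"
  shows "(2::nat) ^ a + 2 ^ b = 2 ^ a' + 2 ^ b' \<longleftrightarrow> {a, b} = {a', b'}"
proof
  assume "(2::nat) ^ a + 2 ^ b = 2 ^ a' + 2 ^ b'"
  hence "n = a \<or> n = b \<longleftrightarrow> n = a' \<or> n = b'" for n using assms bit_two_pow_add_iff by metis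
  thus "{a, b} = {a', b'}" by blast
qed (auto simp: doubleton_eq_iff)

text \<open>The edge set of a low edge is a sum of two distinct powers of two, that of any other edge
  has the two elements \<open>2 ^ g y\<close> and \<open>2 ^ g y + g x + 1\<close>; either way it determines \<open>g\<close> on
  the endpoints.\<close>

definition sparing_labelling :: "('a \<Rightarrow> bool) \<Rightarrow> ('a \<Rightarrow> nat) \<Rightarrow> 'a \<Rightarrow> nat set" where
  "sparing_labelling c g x = (if c x then {0, Suc (g x)} else {2 ^ g x})"

lemma edge_set_index_sparing_labelling:
  "\<not> c y \<Longrightarrow> edge_set_index (sparing_labelling c g) {x, y} =
    (if c x then {2 ^ g y, Suc (g x) + 2 ^ g y} else {2 ^ g x + 2 ^ g y})"
  by (simp add: edge_set_index_doubleton sparing_labelling_def sumset_singletons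
      sumset_pair_singleton)

lemma sparing_colouring_edgeE:
  assumes "simple_graph V E" "sparing_colouring V E c" "e \<in> E"
  obtains x y where "e = {x, y}" "x \<noteq> y" "x \<in> V" "y \<in> V" "\<not> c y"
proof -
  obtain u v where uv: "e = {u, v}" "u \<noteq> v" "u \<in> V" "v \<in> V"
    using assms(1,3) by (rule simple_graph_edgeE)
  have "\<not> c u \<or> \<not> c v" using sparing_colouring_not_high[OF assms(2,3)] uv(1) by auto
  thus ?thesis using that uv by (metis insert_commute)
qed

lemma inj_on_edge_set_index_sparing_labelling:
  assumes s: "simple_graph V E" and c: "sparing_colouring V E c" and g: "inj_on g V"
  shows "inj_on (edge_set_index (sparing_labelling c g)) E"
proof (rule inj_onI)
  fix e1 e2 assume e: "e1 \<in> E" "e2 \<in> E"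
    and eq: "edge_set_index (sparing_labelling c g) e1 = edge_set_index (sparing_labelling c g) e2"
  obtain x y where 1: "e1 = {x, y}" "x \<noteq> y" "x \<in> V" "y \<in> V" "\<not> c y"
    using s c e(1) by (rule sparing_colouring_edgeE)
  obtain x' y' where 2: "e2 = {x', y'}" "x' \<noteq> y'" "x' \<in> V" "y' \<in> V" "\<not> c y'"
    using s c e(2) by (rule sparing_colouring_edgeE)
  have "g x \<noteq> g y" "g x' \<noteq> g y'" using g 1 2 by (auto dest: inj_onD)
  hence "{g x, g y} = {g x', g y'}"
    using eq 1 2 by (auto simp: edge_set_index_sparing_labelling two_pow_add_eq_iff
        doubleton_eq_iff split: if_splits)
  hence "g ` e1 = g ` e2" using 1 2 by simp
  moreover have "e1 \<subseteq> V" "e2 \<subseteq> V" using 1 2 by simp_all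
  ultimately show "e1 = e2" using inj_on_image_eq_iff[OF g] by blast
qed

lemma inj_on_sparing_labelling:
  assumes g: "inj_on g V"
  shows "inj_on (sparing_labelling c g) V"
proof (rule inj_onI)
  fix x y assume "x \<in> V" "y \<in> V" "sparing_labelling c g x = sparing_labelling c g y"
  moreover from this(3) have "g x = g y"
    by (auto simp: sparing_labelling_def doubleton_eq_iff split: if_splits)
  ultimately show "x = y" using g by (auto dest: inj_onD)
qed

lemma weak_iasi_sparing_labelling:
  assumes s: "simple_graph V E" and c: "sparing_colouring V E c" and g: "inj_on g V"
  shows "weak_iasi V E (sparing_labelling c g)"
  unfolding weak_iasi_def iasi_def
proof (intro conjI ballI allI impI inj_on_sparing_labelling g
    inj_on_edge_set_index_sparing_labelling[OF s c g])
  fix x show "finite (sparing_labelling c g x)" "sparing_labelling c g x \<noteq> {}"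
    by (simp_all add: sparing_labelling_def)
next
  fix u v assume "{u, v} \<in> E"
  with s c obtain x y where xy: "{u, v} = {x, y}" "x \<noteq> y" "x \<in> V" "y \<in> V" "\<not> c y"
    by (rule sparing_colouring_edgeE)
  let ?f = "sparing_labelling c g"
  have "card (sumset (?f u) (?f v)) = card (edge_set_index ?f {x, y})"
    using xy(1) by (simp add: edge_set_index_doubleton[symmetric])
  also have "\<dots> = max (card (?f x)) (card (?f y))"
    using xy(5) by (simp add: edge_set_index_sparing_labelling sparing_labelling_def)
  also have "\<dots> = max (card (?f u)) (card (?f v))"
    using xy(1) by (auto simp: doubleton_eq_iff max.commute)
  finally show "card (sumset (?f u) (?f v)) = max (card (?f u)) (card (?f v))" .
qed

lemma mono_indexed_count_sparing_labelling_le: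
  assumes s: "simple_graph V E" and c: "sparing_colouring V E c"
  shows "mono_indexed_count E (sparing_labelling c g) \<le> card (odd_cycles V E)"
  unfolding mono_indexed_count_def
proof (rule card_le_if_unique_partner[where R = "\<lambda>e C. e \<in> C"])
  show "finite (odd_cycles V E)" using finite_cycles[OF s] by (simp add: odd_cycles_def)
  have low: "low_edge c e"
    if e: "e \<in> E" "card (edge_set_index (sparing_labelling c g) e) = 1" for e
  proof -
    obtain x y where "e = {x, y}" "x \<noteq> y" "x \<in> V" "y \<in> V" "\<not> c y"
      using s c e(1) by (rule sparing_colouring_edgeE)
    thus ?thesis using e(2) by (auto simp: edge_set_index_sparing_labelling low_edge_def
        split: if_splits)
  qed
  show "\<exists>C\<in>odd_cycles V E. e \<in> C"
    if "e \<in> {e \<in> E. card (edge_set_index (sparing_labelling c g) e) = 1}" for e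
    using that low sparing_colouring_low_on_odd_cycle[OF c] by blast
  show "e1 = e2" if "e1 \<in> {e \<in> E. card (edge_set_index (sparing_labelling c g) e) = 1}"
    "e2 \<in> {e \<in> E. card (edge_set_index (sparing_labelling c g) e) = 1}"
    "C \<in> odd_cycles V E" "e1 \<in> C" "e2 \<in> C" for e1 e2 C
    using that low sparing_colouring_low_unique[OF c] by blast
qed

theorem theorem2p24:
  fixes V :: "'a set" and E :: "'a set set"
  assumes "cactus V E"
  shows "sparing_number V E = card (odd_cycles V E)"
proof -
  have cf: "cactus_forest V E" using assms by (rule cactus_imp_cactus_forest)
  hence s: "simple_graph V E" by (simp add: cactus_forest_def)
  obtain c where c: "sparing_colouring V E c" using sparing_colouring_exists[OF cf] by blast
  obtain g :: "'a \<Rightarrow> nat" where g: "inj_on g V"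
    using s finite_imp_inj_to_nat_seg by (metis simple_graph_def)
  let ?f = "sparing_labelling c g"
  have f: "weak_iasi V E ?f" using s c g by (rule weak_iasi_sparing_labelling)
  hence "mono_indexed_count E ?f = card (odd_cycles V E)"
    using mono_indexed_count_sparing_labelling_le[OF s c]
      card_odd_cycles_le_mono_indexed_count[OF cf] by (simp add: order_antisym)
  thus ?thesis
    unfolding sparing_number_def using f card_odd_cycles_le_mono_indexed_count[OF cf]
    by (intro Least_equality) auto
qed

end
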